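(* Let $X,Y$ be non-empty subsets of $A^+$. (i) If $XY$ and $YX$ are prefix codes (resp. maximal prefix codes), then $X$ and $Y$ are prefix codes (resp. maximal prefix codes). (ii) If $XY$ and $YX$ are suffix codes (resp. maximal suffix codes), then $X$ and $Y$ are suffix codes (resp. maximal suffix codes). (iii) If $XY$ and $YX$ are bifix codes (resp. thin maximal bifix codes), then $X$ and $Y$ are bifix codes (resp. thin maximal bifix codes).
   Context: $A$ is a finite alphabet, $A^*$ the set of words, $A^+$ the non-empty words, $XY=\{xy:x\in X,y\in Y\}$. A prefix (suffix) code is a subset of $A^+$ in which no word is a proper prefix (suffix) of another; a bifix code is both. A prefix (suffix, bifix) code is maximal if it is not properly contained in another prefix (suffix, bifix) code over $A$. A set $X\subseteq A^*$ is thin if there is a word $w\in A^*$ that is not a factor (infix) of any word of $X$. *)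

theory Defs
  imports Main "HOL-Library.Sublist"
begin

definition plus_words :: "'a set \<Rightarrow> 'a list set" where
  "plus_words A = lists A - {[]}"

definition conc :: "'a list set \<Rightarrow> 'a list set \<Rightarrow> 'a list set" where
  "conc X Y = {x @ y | x y. x \<in> X \<and> y \<in> Y}"

definition prefix_code :: "'a set \<Rightarrow> 'a list set \<Rightarrow> bool" where
  "prefix_code A X \<longleftrightarrow> X \<subseteq> plus_words A \<and>
     (\<forall>x\<in>X. \<forall>y\<in>X. \<not> strict_prefix x y)"

definition suffix_code :: "'a set \<Rightarrow> 'a list set \<Rightarrow> bool" where
  "suffix_code A X \<longleftrightarrow> X \<subseteq> plus_words A \<and>
     (\<forall>x\<in>X. \<forall>y\<in>X. \<not> strict_suffix x y)"

definition bifix_code :: "'a set \<Rightarrow> 'a list set \<Rightarrow> bool" where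
  "bifix_code A X \<longleftrightarrow> prefix_code A X \<and> suffix_code A X"

definition maximal_prefix_code :: "'a set \<Rightarrow> 'a list set \<Rightarrow> bool" where
  "maximal_prefix_code A X \<longleftrightarrow> prefix_code A X \<and>
     (\<forall>Z. prefix_code A Z \<and> X \<subseteq> Z \<longrightarrow> Z = X)"

definition maximal_suffix_code :: "'a set \<Rightarrow> 'a list set \<Rightarrow> bool" where
  "maximal_suffix_code A X \<longleftrightarrow> suffix_code A X \<and>
     (\<forall>Z. suffix_code A Z \<and> X \<subseteq> Z \<longrightarrow> Z = X)"

definition maximal_bifix_code :: "'a set \<Rightarrow> 'a list set \<Rightarrow> bool" where
  "maximal_bifix_code A X \<longleftrightarrow> bifix_code A X \<and>
     (\<forall>Z. bifix_code A Z \<and> X \<subseteq> Z \<longrightarrow> Z = X)"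

definition thin :: "'a set \<Rightarrow> 'a list set \<Rightarrow> bool" where
  "thin A X \<longleftrightarrow> (\<exists>w\<in>lists A. \<forall>x\<in>X. \<not> sublist w x)"

end

theory Submission
  imports Defs
begin

text \<open>Fix a word \<open>y \<in> Y\<close>. Right multiplication \<open>x \<mapsto> xy\<close> embeds \<open>X\<close> into \<open>XY\<close> and
  preserves the suffix order, so \<open>XY\<close> suffix implies \<open>X\<close> suffix; left multiplication by \<open>y\<close>
  embeds \<open>X\<close> into \<open>YX\<close> preserving the prefix order. Hence \<open>X\<close> and \<open>Y\<close> are prefix
  (suffix, bifix) codes, and a forbidden factor of \<open>XY\<close> is one of \<open>X\<close>. For maximality,
  if \<open>Z \<supseteq> X\<close> is a prefix code then so is \<open>ZY\<close> \<open>\<supseteq>\<close> \<open>XY\<close>, so \<open>ZY = XY\<close> by maximality of \<open>XY\<close>;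
  as \<open>Z\<close> is a prefix code, \<open>zy = xy'\<close> with \<open>x \<in> X\<close> forces \<open>z = x\<close>, giving \<open>Z = X\<close>.
  Suffix codes are handled symmetrically through \<open>YX\<close>.\<close>

lemma conc_memI: "x \<in> X \<Longrightarrow> y \<in> Y \<Longrightarrow> x @ y \<in> conc X Y"
  by (auto simp: conc_def)

lemma conc_mono: "X \<subseteq> X' \<Longrightarrow> Y \<subseteq> Y' \<Longrightarrow> conc X Y \<subseteq> conc X' Y'"
  by (auto simp: conc_def)

lemma conc_plus_words:
  "X \<subseteq> plus_words A \<Longrightarrow> Y \<subseteq> plus_words A \<Longrightarrow> conc X Y \<subseteq> plus_words A"
  by (fastforce simp: conc_def plus_words_def)

lemma prefix_code_append_cancel:
  assumes "prefix_code A X" "x \<in> X" "x' \<in> X" "x @ y = x' @ y'"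
  shows "x = x'"
proof -
  have "prefix x x' \<or> prefix x' x"
    using prefix_same_cases[of x "x' @ y'" x'] assms(4) by (metis prefixI)
  then show ?thesis
    using assms(1-3) unfolding prefix_code_def strict_prefix_def by blast
qed

lemma suffix_code_append_cancel:
  assumes "suffix_code A X" "x \<in> X" "x' \<in> X" "y @ x = y' @ x'"
  shows "x = x'"
proof -
  have "suffix x x' \<or> suffix x' x"
    using suffix_same_cases[of x "y' @ x'" x'] assms(4) by (metis suffixI)
  then show ?thesis
    using assms(1-3) unfolding suffix_code_def strict_suffix_def by blast
qed

lemma prefix_code_conc:
  assumes X: "prefix_code A X" and Y: "prefix_code A Y"
  shows "prefix_code A (conc X Y)"
  unfolding prefix_code_def
proof (intro conjI ballI notI)
  show "conc X Y \<subseteq> plus_words A"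
    using X Y conc_plus_words unfolding prefix_code_def by blast
next
  fix u v assume "u \<in> conc X Y" "v \<in> conc X Y" "strict_prefix u v"
  then obtain x y x' y' where xy: "x \<in> X" "y \<in> Y" "x' \<in> X" "y' \<in> Y"
    and "u = x @ y" "v = x' @ y'"
    by (auto simp: conc_def)
  obtain w where "v = u @ w" "w \<noteq> []"
    using \<open>strict_prefix u v\<close> by (auto simp: strict_prefix_def prefix_def)
  then have uv: "x' @ y' = x @ y @ w" "w \<noteq> []"
    using \<open>u = x @ y\<close> \<open>v = x' @ y'\<close> by simp_all
  have "x' = x"
    using prefix_code_append_cancel[OF X xy(3,1) uv(1)] .
  then have "strict_prefix y y'"
    using uv by (auto simp: strict_prefix_def)
  then show False
    using Y xy(2,4) unfolding prefix_code_def by blast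
qed

lemma suffix_code_conc:
  assumes X: "suffix_code A X" and Y: "suffix_code A Y"
  shows "suffix_code A (conc X Y)"
  unfolding suffix_code_def
proof (intro conjI ballI notI)
  show "conc X Y \<subseteq> plus_words A"
    using X Y conc_plus_words unfolding suffix_code_def by blast
next
  fix u v assume "u \<in> conc X Y" "v \<in> conc X Y" "strict_suffix u v"
  then obtain x y x' y' where xy: "x \<in> X" "y \<in> Y" "x' \<in> X" "y' \<in> Y"
    and "u = x @ y" "v = x' @ y'"
    by (auto simp: conc_def)
  obtain w where "v = w @ u" "w \<noteq> []"
    using \<open>strict_suffix u v\<close> by (auto simp: strict_suffix_def suffix_def)
  then have uv: "x' @ y' = (w @ x) @ y" "w \<noteq> []"
    using \<open>u = x @ y\<close> \<open>v = x' @ y'\<close> by simp_all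
  have "y' = y"
    using suffix_code_append_cancel[OF Y xy(4,2) uv(1)] .
  then have "strict_suffix x x'"
    using uv by (auto simp: strict_suffix_def suffix_def)
  then show False
    using X xy(1,3) unfolding suffix_code_def by blast
qed

lemma bifix_code_conc:
  "bifix_code A X \<Longrightarrow> bifix_code A Y \<Longrightarrow> bifix_code A (conc X Y)"
  unfolding bifix_code_def using prefix_code_conc suffix_code_conc by blast

lemma prefix_code_right_factor:
  assumes "prefix_code A (conc Y X)" "Y \<noteq> {}" "X \<subseteq> plus_words A"
  shows "prefix_code A X"
  unfolding prefix_code_def
proof (intro conjI ballI notI)
  fix x x' assume x: "x \<in> X" "x' \<in> X" and "strict_prefix x x'"
  obtain y where "y \<in> Y" using assms(2) by blast
  have "strict_prefix (y @ x) (y @ x')"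
    using \<open>strict_prefix x x'\<close> by (auto simp: strict_prefix_def)
  then show False
    using assms(1) conc_memI[OF \<open>y \<in> Y\<close> x(1)] conc_memI[OF \<open>y \<in> Y\<close> x(2)]
    unfolding prefix_code_def by blast
qed (fact assms(3))

lemma suffix_code_left_factor:
  assumes "suffix_code A (conc X Y)" "Y \<noteq> {}" "X \<subseteq> plus_words A"
  shows "suffix_code A X"
  unfolding suffix_code_def
proof (intro conjI ballI notI)
  fix x x' assume x: "x \<in> X" "x' \<in> X" and "strict_suffix x x'"
  obtain y where "y \<in> Y" using assms(2) by blast
  have "strict_suffix (x @ y) (x' @ y)"
    using \<open>strict_suffix x x'\<close> by (auto simp: strict_suffix_def suffix_def)
  then show False
    using assms(1) conc_memI[OF x(1) \<open>y \<in> Y\<close>] conc_memI[OF x(2) \<open>y \<in> Y\<close>]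
    unfolding suffix_code_def by blast
qed (fact assms(3))

lemma prefix_code_conc_right_cancel:
  assumes Z: "prefix_code A Z" and "X \<subseteq> Z" "Y \<noteq> {}" "conc Z Y = conc X Y"
  shows "Z = X"
proof
  obtain y where "y \<in> Y" using assms(3) by blast
  show "Z \<subseteq> X"
  proof
    fix z assume "z \<in> Z"
    then have "z @ y \<in> conc X Y"
      using conc_memI[OF _ \<open>y \<in> Y\<close>] assms(4) by blast
    then obtain x y' where "x \<in> X" "z @ y = x @ y'"
      by (auto simp: conc_def)
    with prefix_code_append_cancel[OF Z \<open>z \<in> Z\<close>] \<open>X \<subseteq> Z\<close> show "z \<in> X"
      by blast
  qed
qed (fact assms(2))

lemma suffix_code_conc_left_cancel:
  assumes Z: "suffix_code A Z" and "X \<subseteq> Z" "Y \<noteq> {}" "conc Y Z = conc Y X"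
  shows "Z = X"
proof
  obtain y where "y \<in> Y" using assms(3) by blast
  show "Z \<subseteq> X"
  proof
    fix z assume "z \<in> Z"
    then have "y @ z \<in> conc Y X"
      using conc_memI[OF \<open>y \<in> Y\<close>] assms(4) by blast
    then obtain x y' where "x \<in> X" "y @ z = y' @ x"
      by (auto simp: conc_def)
    with suffix_code_append_cancel[OF Z \<open>z \<in> Z\<close>] \<open>X \<subseteq> Z\<close> show "z \<in> X"
      by blast
  qed
qed (fact assms(2))

lemma maximal_prefix_code_left_factor:
  assumes max: "maximal_prefix_code A (conc X Y)"
    and "prefix_code A X" "prefix_code A Y" "Y \<noteq> {}"
  shows "maximal_prefix_code A X"
  unfolding maximal_prefix_code_def
proof (intro conjI allI impI)
  fix Z assume Z: "prefix_code A Z \<and> X \<subseteq> Z"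
  have "conc Z Y = conc X Y"
    using max prefix_code_conc[of A Z Y] conc_mono[of X Z Y Y] Z assms(3)
    unfolding maximal_prefix_code_def by blast
  then show "Z = X"
    using prefix_code_conc_right_cancel Z assms(4) by blast
qed (fact assms(2))

lemma maximal_suffix_code_right_factor:
  assumes max: "maximal_suffix_code A (conc Y X)"
    and "suffix_code A X" "suffix_code A Y" "Y \<noteq> {}"
  shows "maximal_suffix_code A X"
  unfolding maximal_suffix_code_def
proof (intro conjI allI impI)
  fix Z assume Z: "suffix_code A Z \<and> X \<subseteq> Z"
  have "conc Y Z = conc Y X"
    using max suffix_code_conc[of A Y Z] conc_mono[of Y Y X Z] Z assms(3)
    unfolding maximal_suffix_code_def by blast
  then show "Z = X"
    using suffix_code_conc_left_cancel Z assms(4) by blast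
qed (fact assms(2))

lemma maximal_bifix_code_left_factor:
  assumes max: "maximal_bifix_code A (conc X Y)"
    and "bifix_code A X" "bifix_code A Y" "Y \<noteq> {}"
  shows "maximal_bifix_code A X"
  unfolding maximal_bifix_code_def
proof (intro conjI allI impI)
  fix Z assume Z: "bifix_code A Z \<and> X \<subseteq> Z"
  have "conc Z Y = conc X Y"
    using max bifix_code_conc[of A Z Y] conc_mono[of X Z Y Y] Z assms(3)
    unfolding maximal_bifix_code_def by blast
  then show "Z = X"
    using prefix_code_conc_right_cancel Z assms(4) unfolding bifix_code_def by blast
qed (fact assms(2))

lemma thin_left_factor:
  assumes "thin A (conc X Y)" "Y \<noteq> {}"
  shows "thin A X"
proof -
  obtain w where w: "w \<in> lists A" "\<forall>u\<in>conc X Y. \<not> sublist w u"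
    using assms(1) unfolding thin_def by blast
  obtain y where "y \<in> Y" using assms(2) by blast
  have "\<not> sublist w x" if "x \<in> X" for x
    using w(2) conc_memI[OF that \<open>y \<in> Y\<close>] sublist_order.order.trans by blast
  then show ?thesis
    using w(1) unfolding thin_def by blast
qed

theorem propositionP:
  fixes A :: "'a set" and X Y :: "'a list set"
  assumes "finite A"
    and "X \<subseteq> plus_words A" and "Y \<subseteq> plus_words A"
    and "X \<noteq> {}" and "Y \<noteq> {}"
  shows "(prefix_code A (conc X Y) \<and> prefix_code A (conc Y X)
            \<longrightarrow> prefix_code A X \<and> prefix_code A Y)
       \<and> (maximal_prefix_code A (conc X Y) \<and> maximal_prefix_code A (conc Y X)
            \<longrightarrow> maximal_prefix_code A X \<and> maximal_prefix_code A Y)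
       \<and> (suffix_code A (conc X Y) \<and> suffix_code A (conc Y X)
            \<longrightarrow> suffix_code A X \<and> suffix_code A Y)
       \<and> (maximal_suffix_code A (conc X Y) \<and> maximal_suffix_code A (conc Y X)
            \<longrightarrow> maximal_suffix_code A X \<and> maximal_suffix_code A Y)
       \<and> (bifix_code A (conc X Y) \<and> bifix_code A (conc Y X)
            \<longrightarrow> bifix_code A X \<and> bifix_code A Y)
       \<and> (thin A (conc X Y) \<and> maximal_bifix_code A (conc X Y)
            \<and> thin A (conc Y X) \<and> maximal_bifix_code A (conc Y X)
            \<longrightarrow> thin A X \<and> maximal_bifix_code A X \<and> thin A Y \<and> maximal_bifix_code A Y)"
proof -
  have prefix: "prefix_code A (conc X Y) \<and> prefix_code A (conc Y X)
      \<longrightarrow> prefix_code A X \<and> prefix_code A Y"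
    using prefix_code_right_factor assms(2-5) by blast
  have suffix: "suffix_code A (conc X Y) \<and> suffix_code A (conc Y X)
      \<longrightarrow> suffix_code A X \<and> suffix_code A Y"
    using suffix_code_left_factor assms(2-5) by blast
  have bifix: "bifix_code A (conc X Y) \<and> bifix_code A (conc Y X)
      \<longrightarrow> bifix_code A X \<and> bifix_code A Y"
    using prefix suffix unfolding bifix_code_def by blast
  have max_prefix: "maximal_prefix_code A (conc X Y) \<and> maximal_prefix_code A (conc Y X)
      \<longrightarrow> maximal_prefix_code A X \<and> maximal_prefix_code A Y"
    using prefix assms(4,5) maximal_prefix_code_left_factor[of A X Y]
      maximal_prefix_code_left_factor[of A Y X]
    unfolding maximal_prefix_code_def[of A "conc _ _"] by blast
  have max_suffix: "maximal_suffix_code A (conc X Y) \<and> maximal_suffix_code A (conc Y X)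
      \<longrightarrow> maximal_suffix_code A X \<and> maximal_suffix_code A Y"
    using suffix assms(4,5) maximal_suffix_code_right_factor[of A X Y]
      maximal_suffix_code_right_factor[of A Y X]
    unfolding maximal_suffix_code_def[of A "conc _ _"] by blast
  have max_bifix: "maximal_bifix_code A (conc X Y) \<and> maximal_bifix_code A (conc Y X)
      \<longrightarrow> maximal_bifix_code A X \<and> maximal_bifix_code A Y"
    using bifix assms(4,5) maximal_bifix_code_left_factor[of A X Y]
      maximal_bifix_code_left_factor[of A Y X]
    unfolding maximal_bifix_code_def[of A "conc _ _"] by blast
  show ?thesis
    using prefix suffix bifix max_prefix max_suffix max_bifix assms(4,5)
      thin_left_factor[of A X Y] thin_left_factor[of A Y X]
    by blast
qed

end
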